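(* Let $\lambda<\mathfrak{t}$ be an infinite cardinal, let $A\subseteq\omega$ be infinite, and let $(f_\alpha:\alpha<\lambda)$ be a sequence of functions $f_\alpha:\omega\to[\omega]^{<\aleph_0}$ such that $f_\beta\le_A f_\alpha$ for all $\alpha<\beta<\lambda$, and such that for each $\alpha<\lambda$ the set $\{m\in A: f_\alpha(m)=\emptyset\}$ is finite. Then there exist an infinite $B\subseteq A$ and a function $f:\omega\to[\omega]^{<\aleph_0}$ such that $f\le_B f_\alpha$ for every $\alpha<\lambda$ and $f(m)\neq\emptyset$ for every $m\in B$.
   Context: $[\omega]^{<\aleph_0}$ is the set of finite subsets of $\omega$. For $X,Y\subseteq\omega$ (or of $\omega\times\omega$), $X\subseteq_* Y$ means $X\setminus Y$ is finite. A tower is a sequence $(X_\alpha:\alpha<\kappa)$ of infinite subsets of $\omega$ with $X_\beta\subseteq_* X_\alpha$ whenever $\alpha<\beta<\kappa$; a pseudo-intersection of a family of sets is an infinite $X$ with $X\subseteq_* B$ for every member $B$ of the family. $\mathfrak{t}$ is the least cardinality of a tower with no pseudo-intersection. For $f,g:\omega\to[\omega]^{<\aleph_0}$ and infinite $A\subseteq\omega$, $f\le_A g$ means that $\{n\in A: f(n)\not\subseteq g(n)\}$ is finite. *)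

theory Defs
  imports Main
begin

text \<open>Cardinals are represented as in HOL's BNF cardinal library: an (infinite)
cardinal \<lambda> is a relation r with Card_order r (an initial ordinal, i.e. a well-order
minimal in its cardinality) whose field is infinite. Indices \<alpha> < \<lambda> are the
elements of Field r, and \<alpha> < \<beta> means (\<alpha>,\<beta>) \<in> r and \<alpha> \<noteq> \<beta>.\<close>

definition strict_less :: "'a rel \<Rightarrow> 'a \<Rightarrow> 'a \<Rightarrow> bool" where
  "strict_less r a b \<longleftrightarrow> (a, b) \<in> r \<and> a \<noteq> b"

definition is_tower :: "'a rel \<Rightarrow> 'a set \<Rightarrow> ('a \<Rightarrow> nat set) \<Rightarrow> bool" where
  "is_tower r S X \<longleftrightarrow> (\<forall>a\<in>S. infinite (X a)) \<and>
     (\<forall>a\<in>S. \<forall>b\<in>S. strict_less r a b \<longrightarrow> finite (X b - X a))"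

definition pseudo_intersection :: "nat set \<Rightarrow> nat set set \<Rightarrow> bool" where
  "pseudo_intersection P F \<longleftrightarrow> infinite P \<and> (\<forall>Y\<in>F. finite (P - Y))"

text \<open>\<lambda> < t: every tower whose length is an ordinal \<le> \<lambda> has a pseudo-intersection.
The order types of subsets of \<lambda> are exactly the ordinals \<le> \<lambda>.\<close>
definition below_tower_number :: "'a rel \<Rightarrow> bool" where
  "below_tower_number r \<longleftrightarrow>
     (\<forall>S \<subseteq> Field r. \<forall>X. is_tower r S X \<longrightarrow> (\<exists>P. pseudo_intersection P (X ` S)))"

definition le_on :: "nat set \<Rightarrow> (nat \<Rightarrow> nat set) \<Rightarrow> (nat \<Rightarrow> nat set) \<Rightarrow> bool" where
  "le_on A f g \<longleftrightarrow> finite {n \<in> A. \<not> f n \<subseteq> g n}"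

end

theory Submission
  imports Defs "HOL-Library.Countable"
begin

text \<open>Identify each \<open>f\<^sub>\<alpha>\<close> with its graph \<open>Y\<^sub>\<alpha> = {(m, k). m \<in> A, k \<in> f\<^sub>\<alpha> m}\<close>, a subset of the
countable set \<open>\<omega> \<times> \<omega>\<close>. Since \<open>f\<^sub>\<alpha>\<close> is nonempty at almost all points of \<open>A\<close>, each \<open>Y\<^sub>\<alpha>\<close> is
infinite, and \<open>f\<^sub>\<beta> \<le>\<^sub>A f\<^sub>\<alpha>\<close> with finite values gives \<open>Y\<^sub>\<beta> \<subseteq>\<^sub>* Y\<^sub>\<alpha>\<close>; so the graphs form a tower
of length \<open>\<lambda> < t\<close> and have a pseudo-intersection \<open>Q\<close>. Let \<open>f m\<close> be the vertical section of
\<open>Q\<close> at \<open>m\<close> and \<open>B\<close> the set of \<open>m \<in> A\<close> where it is nonempty. Almost all of \<open>Q\<close> lies in one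
graph \<open>Y\<^sub>\<alpha>\<close>, so the sections are finite, and \<open>Q\<close> being infinite forces \<open>B\<close> to be infinite;
finally \<open>f m \<subseteq> f\<^sub>\<alpha> m\<close> fails only at first coordinates of the finite set \<open>Q - Y\<^sub>\<alpha>\<close>.
That \<open>\<lambda>\<close> is an infinite cardinal plays no role; the index set need only be nonempty.\<close>

lemma infinite_Sigma_if_almost_nonempty:
  assumes "infinite A" and "finite {m \<in> A. G m = {}}"
  shows "infinite (Sigma A G)"
proof
  assume "finite (Sigma A G)"
  moreover have "A - {m \<in> A. G m = {}} \<subseteq> fst ` Sigma A G"
    by (force simp: image_iff)
  ultimately have "finite (A - {m \<in> A. G m = {}})"
    by (meson finite_imageI finite_subset)
  with assms show False by simp
qed

lemma finite_Sigma_diff_if_le_on: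
  assumes "le_on A G H" and "\<And>n. finite (G n)"
  shows "finite (Sigma A G - Sigma A H)"
proof -
  have "Sigma A G - Sigma A H \<subseteq> Sigma {n \<in> A. \<not> G n \<subseteq> H n} G"
    by auto
  moreover have "finite (Sigma {n \<in> A. \<not> G n \<subseteq> H n} G)"
    using assms unfolding le_on_def by (intro finite_SigmaI) auto
  ultimately show ?thesis by (rule finite_subset)
qed

lemma below_tower_number_pseudo_intersection_countable:
  fixes Y :: "'a \<Rightarrow> 'b::countable set"
  assumes "below_tower_number r" and "S \<subseteq> Field r" and "a\<^sub>0 \<in> S"
    and "\<forall>a\<in>S. infinite (Y a)"
    and "\<forall>a\<in>S. \<forall>b\<in>S. strict_less r a b \<longrightarrow> finite (Y b - Y a)"
  shows "\<exists>Q :: 'b set. infinite Q \<and> (\<forall>a\<in>S. finite (Q - Y a))"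
proof -
  have "is_tower r S (\<lambda>a. to_nat ` Y a)"
    using assms(4,5)
    by (simp add: is_tower_def finite_image_iff image_set_diff[symmetric, OF inj_to_nat])
  then obtain P where P: "pseudo_intersection P ((\<lambda>a. to_nat ` Y a) ` S)"
    using assms(1,2) unfolding below_tower_number_def by blast
  define Q :: "'b set" where "Q = to_nat -` P"
  have "finite (Q - Y a)" if "a \<in> S" for a
  proof -
    have "to_nat ` (Q - Y a) \<subseteq> P - to_nat ` Y a"
      by (auto simp: Q_def)
    moreover have "finite (P - to_nat ` Y a)"
      using P \<open>a \<in> S\<close> unfolding pseudo_intersection_def by blast
    ultimately have "finite (to_nat ` (Q - Y a))"
      by (rule finite_subset)
    then show ?thesis by (simp add: finite_image_iff)
  qed
  moreover have "infinite Q"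
  proof
    assume "finite Q"
    have "P \<subseteq> (P - to_nat ` Y a\<^sub>0) \<union> to_nat ` Q"
      by (auto simp: Q_def)
    moreover have "finite (P - to_nat ` Y a\<^sub>0)"
      using P assms(3) unfolding pseudo_intersection_def by blast
    ultimately have "finite P"
      using \<open>finite Q\<close> by (meson finite_Un finite_imageI finite_subset)
    with P show False
      unfolding pseudo_intersection_def by blast
  qed
  ultimately show ?thesis by blast
qed

lemma finite_Image_if_almost_subset_Sigma:
  assumes "finite (Q - Sigma A G)" and "finite (G n)"
  shows "finite (Q `` {n})"
proof -
  have "Q `` {n} \<subseteq> snd ` (Q - Sigma A G) \<union> G n"
    by force
  then show ?thesis
    using assms by (meson finite_Un finite_imageI finite_subset)
qed

lemma le_on_Image_if_almost_subset_Sigma: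
  assumes "finite (Q - Sigma A G)" and "B \<subseteq> A"
  shows "le_on B (\<lambda>n. Q `` {n}) G"
proof -
  have "{n \<in> B. \<not> Q `` {n} \<subseteq> G n} \<subseteq> fst ` (Q - Sigma A G)"
    using assms(2) by force
  then show ?thesis
    unfolding le_on_def using assms(1) by (meson finite_imageI finite_subset)
qed

lemma infinite_nonempty_Image_if_almost_subset_Sigma:
  assumes "infinite Q" and "finite (Q - Sigma A G)" and "\<And>n. finite (Q `` {n})"
  shows "infinite {n \<in> A. Q `` {n} \<noteq> {}}"
proof
  let ?B = "{n \<in> A. Q `` {n} \<noteq> {}}"
  assume "finite ?B"
  have "Q \<subseteq> (Q - Sigma A G) \<union> Sigma ?B (\<lambda>n. Q `` {n})"
    by auto
  moreover have "finite (Sigma ?B (\<lambda>n. Q `` {n}))"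
    using \<open>finite ?B\<close> assms(3) by blast
  ultimately show False
    using assms(1,2) by (meson finite_Un finite_subset)
qed

theorem mainTheorem9:
  fixes r :: "'a rel" and A :: "nat set" and F :: "'a \<Rightarrow> nat \<Rightarrow> nat set"
  assumes "Card_order r" and "infinite (Field r)" and "below_tower_number r"
    and "infinite A"
    and "\<forall>a\<in>Field r. \<forall>n. finite (F a n)"
    and "\<forall>a\<in>Field r. \<forall>b\<in>Field r. strict_less r a b \<longrightarrow> le_on A (F b) (F a)"
    and "\<forall>a\<in>Field r. finite {m \<in> A. F a m = {}}"
  shows "\<exists>B f. B \<subseteq> A \<and> infinite B \<and> (\<forall>n. finite (f n)) \<and>
           (\<forall>a\<in>Field r. le_on B f (F a)) \<and> (\<forall>m\<in>B. f m \<noteq> {})"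
proof -
  obtain a\<^sub>0 where a\<^sub>0: "a\<^sub>0 \<in> Field r"
    using assms(2) by fastforce
  have "\<forall>a\<in>Field r. infinite (Sigma A (F a))"
    using assms(4,7) by (simp add: infinite_Sigma_if_almost_nonempty)
  moreover have "\<forall>a\<in>Field r. \<forall>b\<in>Field r. strict_less r a b \<longrightarrow>
      finite (Sigma A (F b) - Sigma A (F a))"
    using assms(5,6) by (simp add: finite_Sigma_diff_if_le_on)
  ultimately obtain Q :: "(nat \<times> nat) set"
    where "infinite Q" and Q: "\<forall>a\<in>Field r. finite (Q - Sigma A (F a))"
    using below_tower_number_pseudo_intersection_countable[OF assms(3) subset_refl a\<^sub>0, of "\<lambda>a. Sigma A (F a)"]
    by blast
  define B where "B = {n \<in> A. Q `` {n} \<noteq> {}}"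
  have finite_sections: "finite (Q `` {n})" for n
    using Q a\<^sub>0 assms(5) by (simp add: finite_Image_if_almost_subset_Sigma[of Q A "F a\<^sub>0"])
  have "infinite B"
    unfolding B_def using \<open>infinite Q\<close> Q a\<^sub>0 finite_sections
    by (simp add: infinite_nonempty_Image_if_almost_subset_Sigma[of Q A "F a\<^sub>0"])
  moreover have "\<forall>a\<in>Field r. le_on B (\<lambda>n. Q `` {n}) (F a)"
    using Q by (auto intro!: le_on_Image_if_almost_subset_Sigma[of Q A] simp: B_def)
  moreover have "B \<subseteq> A" and "\<forall>m\<in>B. Q `` {m} \<noteq> {}"
    by (auto simp: B_def)
  ultimately show ?thesis
    using finite_sections by (intro exI[of _ B] exI[of _ "\<lambda>n. Q `` {n}"]) simp
qed

end
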